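(* Let $p$ be an odd prime. Then \[ \sum_{k=0}^{p-1}k\frac{(\frac{1}{p+1})_k^{p+1}}{k!^{p+1}}\equiv 0\pmod{p^3}. \]
   Context: $(a)_k=a(a+1)\cdots(a+k-1)$ is the Pochhammer symbol, with $(a)_0=1$. The congruence is between $p$-integral rational numbers: it means that the sum, a rational number whose denominator is coprime to $p$, has numerator divisible by $p^3$. *)

theory Defs
  imports Complex_Main "HOL-Computational_Algebra.Primes"
begin

definition rat_cong_zero :: "rat \<Rightarrow> int \<Rightarrow> bool" where
  "rat_cong_zero x m \<longleftrightarrow> (\<exists>a b. b \<noteq> 0 \<and> x = of_int a / of_int b \<and> coprime b m \<and> m dvd a)"

end

(* With a = 1/(p+1), the quotient (a)_k/k! is the product of the factors
   (j(p+1) - p)/((p+1)j), j = 1..k. Expanding j(p+1) - p = j + p(j-1) to second order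
   gives (j(p+1) - p)^(p+1) = (j - p) j^p (p+1)^(p+1) (mod p^3) for odd p, and the
   denominators are prime to p. Hence ((a)_k/k!)^(p+1) is congruent mod p^3 to the product
   of the factors (j - p)/j, which is (1-p)_k/k! = (-1)^k binom(p-1,k); finally the sum of
   k (-1)^k binom(p-1,k) over k vanishes for p > 2. *)

theory Submission
  imports Defs "HOL-Number_Theory.Cong"
begin

lemma rat_cong_zero_0: "rat_cong_zero 0 m"
  unfolding rat_cong_zero_def by (rule exI[of _ 0], rule exI[of _ 1]) simp

lemma rat_cong_zero_add:
  assumes "rat_cong_zero x m" "rat_cong_zero y m"
  shows "rat_cong_zero (x + y) m"
proof -
  obtain a b where ab: "b \<noteq> 0" "x = of_int a / of_int b" "coprime b m" "m dvd a"
    using assms(1) unfolding rat_cong_zero_def by blast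
  obtain c d where cd: "d \<noteq> 0" "y = of_int c / of_int d" "coprime d m" "m dvd c"
    using assms(2) unfolding rat_cong_zero_def by blast
  have "x + y = of_int (a * d + c * b) / of_int (b * d)"
    using ab cd by (simp add: field_simps)
  moreover have "b * d \<noteq> 0" "coprime (b * d) m" "m dvd a * d + c * b"
    using ab cd by simp_all
  ultimately show ?thesis unfolding rat_cong_zero_def by blast
qed

lemma rat_cong_zero_sum:
  assumes "\<And>k. k \<in> A \<Longrightarrow> rat_cong_zero (f k) m"
  shows "rat_cong_zero (sum f A) m"
  using assms by (induction A rule: infinite_finite_induct) (auto simp: rat_cong_zero_0 rat_cong_zero_add)

lemma rat_cong_zero_mult_int:
  assumes "rat_cong_zero x m"
  shows "rat_cong_zero (of_int c * x) m"
proof -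
  obtain a b where "b \<noteq> 0" "x = of_int a / of_int b" "coprime b m" "m dvd a"
    using assms unfolding rat_cong_zero_def by blast
  then have "b \<noteq> 0 \<and> of_int c * x = of_int (c * a) / of_int b \<and> coprime b m \<and> m dvd c * a"
    by simp
  then show ?thesis unfolding rat_cong_zero_def by blast
qed

lemma rat_cong_zero_prod_diff:
  assumes "finite I"
    and "\<And>i. i \<in> I \<Longrightarrow> x i = of_int (a i) / of_int (d i) \<and> y i = of_int (b i) / of_int (d i)"
    and "\<And>i. i \<in> I \<Longrightarrow> d i \<noteq> 0 \<and> coprime (d i) m \<and> [a i = b i] (mod m)"
  shows "rat_cong_zero (prod x I - prod y I) m"
proof -
  have "prod x I - prod y I = of_int (prod a I - prod b I) / of_int (prod d I)"
    using assms(2) by (simp add: of_int_prod prod_dividef diff_divide_distrib)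
  moreover have "prod d I \<noteq> 0" "coprime (prod d I) m"
    using assms(1,3) by (auto intro: prod_coprime_left)
  moreover have "m dvd prod a I - prod b I"
    using assms(3) cong_prod[of I a b m] by (simp add: cong_iff_dvd_diff)
  ultimately show ?thesis unfolding rat_cong_zero_def by blast
qed

lemma pochhammer_over_fact:
  "pochhammer (a :: 'a :: field_char_0) k / fact k = (\<Prod>j=1..k. (a + of_nat j - 1) / of_nat j)"
proof (induction k)
  case (Suc k)
  have "pochhammer a (Suc k) / fact (Suc k) = pochhammer a k / fact k * ((a + of_nat k) / of_nat (Suc k))"
    by (simp add: pochhammer_Suc fact_Suc field_simps del: of_nat_Suc)
  then show ?case using Suc by (simp add: atLeastAtMostSuc_conv)
qed simp

lemma alternating_pochhammer_sum:
  assumes "n \<noteq> 2"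
  shows "(\<Sum>k=0..n-1. of_nat k * (pochhammer (1 - of_nat n) k / fact k) :: 'a :: field_char_0) = 0"
proof (cases "n = 0")
  case False
  then have "pochhammer (1 - of_nat n) k / fact k = (-1)^k * (of_nat ((n-1) choose k) :: 'a)" for k
    by (simp add: binomial_gbinomial gbinomial_pochhammer of_nat_diff)
  then have "(\<Sum>k=0..n-1. of_nat k * (pochhammer (1 - of_nat n) k / fact k) :: 'a)
      = (\<Sum>k\<le>n-1. (-1)^k * of_nat k * of_nat ((n-1) choose k))"
    by (simp add: atLeast0AtMost mult_ac)
  also have "\<dots> = 0"
    using assms False by (intro choose_alternating_linear_sum) simp
  finally show ?thesis .
qed simp

text \<open>The factor 2 keeps the second-order coefficient \<open>(n+2)(n+1)/2\<close> integral in any ring.\<close>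

lemma power_add_expansion_mod_cube:
  fixes a x :: "'a :: comm_ring_1"
  shows "x^3 dvd 2*(a + x)^(n+2)
           - (2*a^(n+2) + 2*of_nat (n+2)*a^(n+1)*x + of_nat (n+2)*of_nat (n+1)*a^n*x^2)"
proof (induction n)
  case 0
  show ?case by (rule dvdI[of _ _ 0]) (simp add: power2_eq_square algebra_simps)
next
  case (Suc n)
  then obtain r where r: "2*(a + x)^(n+2)
      = 2*a^(n+2) + 2*of_nat (n+2)*a^(n+1)*x + of_nat (n+2)*of_nat (n+1)*a^n*x^2 + x^3*r"
    by (auto simp: dvd_def algebra_simps)
  have "2*(a + x)^(Suc n+2) = (a + x)*(2*(a + x)^(n+2))"
    by simp
  also have "\<dots> = 2*a^(Suc n+2) + 2*of_nat (Suc n+2)*a^(Suc n+1)*x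
      + of_nat (Suc n+2)*of_nat (Suc n+1)*a^Suc n*x^2
      + x^3*(r*a + of_nat (n+2)*of_nat (n+1)*a^n + x*r)"
    unfolding r by (simp add: algebra_simps power2_eq_square power3_eq_cube)
  finally show ?case by simp
qed

lemma scaled_power_cong_mod_cube:
  fixes p :: nat and j :: int
  assumes "odd p"
  shows "[(j*(int p + 1) - int p)^(p+1) = (j - int p)*j^p*(int p + 1)^(p+1)] (mod (int p)^3)"
proof -
  define P where "P = int p"
  obtain n where p: "p = n + 1" using assms by (cases p) auto
  have P_n: "of_nat (n+2) = P + 1" "of_nat (n+1) = P" by (simp_all add: P_def p)
  define d1 where "d1 = 2*(j + P*(j-1))^(p+1) - (2*j^(p+1) + 2*(P+1)*j^p*(P*(j-1)) + (P+1)*P*j^n*(P*(j-1))^2)"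
  define d2 where "d2 = 2*(1 + P)^(p+1) - (2 + 2*(P+1)*P + (P+1)*P*P^2)"
  have "(P*(j-1))^3 dvd d1"
    using power_add_expansion_mod_cube[of "P*(j-1)" j n] unfolding d1_def P_n by (simp add: p)
  then have "P^3 dvd d1"
    by (rule dvd_trans[rotated]) (simp add: power_mult_distrib)
  moreover have "P^3 dvd d2"
    using power_add_expansion_mod_cube[of P 1 n] unfolding d2_def P_n by (simp add: p)
  moreover have "2*((j*(P+1) - P)^(p+1) - (j - P)*j^p*(P+1)^(p+1))
      = d1 - (j - P)*j^p*d2 + P^3*((P+1)*j^n*(j-1)^2 - (P+1)*j^(p+1) + (2 + P + P^2)*j^p)"
  proof -
    have ring_identity: "2*(X - (j - P)*(j*a)*Y) = 2*X - (2*(j*j*a) + 2*(P+1)*(j*a)*(P*(j-1))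
        + (P+1)*P*a*(P*(j-1))^2) - (j - P)*(j*a)*(2*Y - (2 + 2*(P+1)*P + (P+1)*P*P^2))
        + P^3*((P+1)*a*(j-1)^2 - (P+1)*(j*j*a) + (2 + P + P^2)*(j*a))" for X Y a :: int
      by algebra
    have "j*(P+1) - P = j + P*(j-1)" "P + 1 = 1 + P" by (simp_all add: algebra_simps)
    moreover have "j^p = j*j^n" "j^(p+1) = j*j*j^n" by (simp_all add: p)
    ultimately show ?thesis
      unfolding d1_def d2_def using ring_identity[of "(j + P*(j-1))^(p+1)" "j^n" "(1 + P)^(p+1)"]
      by (simp only:)
  qed
  ultimately have "P^3 dvd 2*((j*(P+1) - P)^(p+1) - (j - P)*j^p*(P+1)^(p+1))"
    by simp
  moreover have "coprime (P^3) 2" using assms by (simp add: P_def)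
  ultimately show ?thesis
    unfolding P_def cong_iff_dvd_diff using coprime_dvd_mult_right_iff by blast
qed

lemma pochhammer_recip_step_power:
  fixes p j :: nat
  assumes "j \<noteq> 0"
  shows "((1 / of_nat (p+1) + of_nat j - 1) / of_nat j)^(p+1)
       = (of_int ((int j*(int p + 1) - int p)^(p+1)) / of_int (((int p + 1)*int j)^(p+1)) :: rat)"
proof -
  have "(1 / of_nat (p+1) + of_nat j - 1) / of_nat j
      = (of_int (int j*(int p + 1) - int p) / of_int ((int p + 1)*int j) :: rat)"
    using assms by (simp add: field_simps)
  then show ?thesis by (simp add: power_divide)
qed

lemma pochhammer_neg_step:
  fixes p j :: nat
  assumes "j \<noteq> 0"
  shows "(1 - of_nat p + of_nat j - 1) / of_nat j
       = (of_int ((int j - int p)*int j^p*(int p + 1)^(p+1)) / of_int (((int p + 1)*int j)^(p+1)) :: rat)"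
proof -
  define c where "c = (of_nat j^p * (of_nat p + 1)^(p+1) :: rat)"
  have "c \<noteq> 0" unfolding c_def using assms by simp
  moreover have num: "of_int ((int j - int p)*int j^p*(int p + 1)^(p+1)) = (of_nat j - of_nat p) * c"
    and den: "of_int (((int p + 1)*int j)^(p+1)) = of_nat j * c"
    unfolding c_def by (simp_all add: power_mult_distrib mult_ac)
  ultimately show ?thesis
    unfolding num den using assms by simp
qed

lemma pochhammer_term_cong:
  fixes p k :: nat
  assumes "prime p" "odd p" "k < p"
  shows "rat_cong_zero (of_nat k * (pochhammer (1 / of_nat (p+1)) k / fact k)^(p+1)
           - of_nat k * (pochhammer (1 - of_nat p) k / fact k)) ((int p)^3)"
proof -
  define P where "P = int p"
  have "rat_cong_zero ((\<Prod>j=1..k. ((1 / of_nat (p+1) + of_nat j - 1) / of_nat j)^(p+1))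
      - (\<Prod>j=1..k. (1 - of_nat p + of_nat j - 1) / of_nat j)) (P^3)"
  proof (rule rat_cong_zero_prod_diff[where a = "\<lambda>j. (int j*(P+1) - P)^(p+1)"
        and b = "\<lambda>j. (int j - P)*int j^p*(P+1)^(p+1)" and d = "\<lambda>j. ((P+1)*int j)^(p+1)"])
    fix j assume j: "j \<in> {1..k}"
    then show "((1 / of_nat (p+1) + of_nat j - 1) / of_nat j)^(p+1)
          = (of_int ((int j*(P+1) - P)^(p+1)) / of_int (((P+1)*int j)^(p+1)) :: rat)
        \<and> (1 - of_nat p + of_nat j - 1) / of_nat j
          = (of_int ((int j - P)*int j^p*(P+1)^(p+1)) / of_int (((P+1)*int j)^(p+1)) :: rat)"
      unfolding P_def using pochhammer_recip_step_power pochhammer_neg_step by simp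
    have "coprime (int j) P"
      using j assms(1,3) unfolding P_def
      by (intro prime_imp_coprime[THEN coprime_commute[THEN iffD1]]) (auto dest: dvd_imp_le)
    then show "((P+1)*int j)^(p+1) \<noteq> 0 \<and> coprime (((P+1)*int j)^(p+1)) (P^3)
        \<and> [(int j*(P+1) - P)^(p+1) = (int j - P)*int j^p*(P+1)^(p+1)] (mod P^3)"
      using j assms(1,2) scaled_power_cong_mod_cube[of p "int j"] by (simp add: P_def)
  qed simp
  then have "rat_cong_zero (of_int (int k) * ((\<Prod>j=1..k. ((1 / of_nat (p+1) + of_nat j - 1) / of_nat j)^(p+1))
      - (\<Prod>j=1..k. (1 - of_nat p + of_nat j - 1) / of_nat j))) (P^3)"
    by (rule rat_cong_zero_mult_int)
  then show ?thesis
    by (simp only: P_def pochhammer_over_fact prod_power_distrib right_diff_distrib of_int_of_nat_eq)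
qed

theorem corollary1:
  fixes p :: nat
  assumes "prime p" and "odd p"
  shows "rat_cong_zero
           (\<Sum>k=0..p-1. of_nat k * (pochhammer (1 / of_nat (p+1)) k) ^ (p+1)
                                    / (fact k) ^ (p+1) :: rat)
           ((int p) ^ 3)"
proof -
  have "p \<noteq> 2" using assms(2) by auto
  then have u_sum: "(\<Sum>k=0..p-1. of_nat k * (pochhammer (1 - of_nat p) k / fact k) :: rat) = 0"
    by (rule alternating_pochhammer_sum)
  have "(\<Sum>k=0..p-1. of_nat k * (pochhammer (1 / of_nat (p+1)) k) ^ (p+1) / (fact k) ^ (p+1) :: rat)
      = (\<Sum>k=0..p-1. of_nat k * (pochhammer (1 / of_nat (p+1)) k / fact k)^(p+1)
                       - of_nat k * (pochhammer (1 - of_nat p) k / fact k))"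
    unfolding sum_subtractf u_sum by (simp only: diff_zero power_divide times_divide_eq_right)
  also have "rat_cong_zero \<dots> ((int p)^3)"
  proof (rule rat_cong_zero_sum)
    fix k assume "k \<in> {0..p-1}"
    then have "k < p" using prime_gt_0_nat[OF assms(1)] by auto
    then show "rat_cong_zero (of_nat k * (pochhammer (1 / of_nat (p+1)) k / fact k)^(p+1)
        - of_nat k * (pochhammer (1 - of_nat p) k / fact k)) ((int p)^3)"
      by (rule pochhammer_term_cong[OF assms])
  qed
  finally show ?thesis .
qed

end
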